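(* Let $X$ be a non-empty finite set and $\mathcal{P}$ a partition of $X$ whose distinct block sizes are $l_1<l_2<\cdots<l_r$. Suppose $U\subseteq\Sigma(X,\mathcal{P})$ is such that $S(X,\mathcal{P})\cup U$ generates $\Sigma(X,\mathcal{P})$ as a semigroup, and let $i\in\{1,\ldots,r\}$ be such that either $i=1$ and $l_1\ne 1$, or $i\ge 2$ and $l_i-l_{i-1}\ge 2$. Then $\mathcal{C}_i\cap U\ne\emptyset$.
   Context: $T(X,\mathcal{P})$ is the semigroup (under composition) of maps $f:X\to X$ mapping each block of $\mathcal{P}$ into some block; $S(X,\mathcal{P})$ is its group of units (bijections in $T(X,\mathcal{P})$); $\Sigma(X,\mathcal{P})$ is the set of $f\in T(X,\mathcal{P})$ whose image intersects every block. For $i\le r$, $\mathcal{C}_i$ is the set of all $f\in\Sigma(X,\mathcal{P})$ such that $f$ maps each block into a block of the same size (possibly itself), there is one block of size $l_i$ whose image under $f$ has size $l_i-1$, and $f$ maps all other blocks injectively. *)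

theory Defs
  imports "HOL-Library.FuncSet" "HOL-Library.Disjoint_Sets"
begin

text \<open>Maps X \<rightarrow> X are represented as extensional functions (undefined outside X);
composition is compose X.\<close>

definition T_part :: "'a set \<Rightarrow> 'a set set \<Rightarrow> ('a \<Rightarrow> 'a) set" where
  "T_part X P = {f \<in> X \<rightarrow>\<^sub>E X. \<forall>B\<in>P. \<exists>C\<in>P. f ` B \<subseteq> C}"

definition S_part :: "'a set \<Rightarrow> 'a set set \<Rightarrow> ('a \<Rightarrow> 'a) set" where
  "S_part X P = {f \<in> T_part X P. bij_betw f X X}"

definition Sigma_part :: "'a set \<Rightarrow> 'a set set \<Rightarrow> ('a \<Rightarrow> 'a) set" where
  "Sigma_part X P = {f \<in> T_part X P. \<forall>B\<in>P. f ` X \<inter> B \<noteq> {}}"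

inductive_set gen_sgp :: "'a set \<Rightarrow> ('a \<Rightarrow> 'a) set \<Rightarrow> ('a \<Rightarrow> 'a) set"
  for X :: "'a set" and G :: "('a \<Rightarrow> 'a) set" where
  base: "g \<in> G \<Longrightarrow> g \<in> gen_sgp X G"
| comp: "f \<in> gen_sgp X G \<Longrightarrow> g \<in> gen_sgp X G \<Longrightarrow> compose X f g \<in> gen_sgp X G"

text \<open>Number r of distinct block sizes, and the i-th smallest block size l_i (1-based).\<close>
definition num_sizes :: "'a set set \<Rightarrow> nat" where
  "num_sizes P = card (card ` P)"

definition block_size :: "'a set set \<Rightarrow> nat \<Rightarrow> nat" where
  "block_size P i = sorted_list_of_set (card ` P) ! (i - 1)"

definition C_part :: "'a set \<Rightarrow> 'a set set \<Rightarrow> nat \<Rightarrow> ('a \<Rightarrow> 'a) set" where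
  "C_part X P i = {f \<in> Sigma_part X P.
      (\<forall>B\<in>P. \<exists>C\<in>P. f ` B \<subseteq> C \<and> card C = card B) \<and>
      (\<exists>B\<in>P. card B = block_size P i \<and> card (f ` B) = block_size P i - 1 \<and>
          (\<forall>B'\<in>P. B' \<noteq> B \<longrightarrow> inj_on f B'))}"

end

theory Submission
  imports Defs
begin

text \<open>Suppose \<open>\<C>\<^sub>i \<inter> U = {}\<close> and put \<open>l = l\<^sub>i\<close>; the hypothesis on \<open>i\<close> says \<open>l \<ge> 2\<close> and
that no block has size \<open>l - 1\<close>. A map \<open>g \<in> \<Sigma>(X, \<P>)\<close> of rank at least \<open>|X| - 1\<close> that is not
injective on a block \<open>D\<close> of size \<open>l\<close> loses exactly one point on \<open>D\<close> and is injective on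
all other blocks. Its block map permutes \<open>\<P>\<close>, and \<open>D\<close> cannot land in a block of size
\<open>l - 1\<close>, so \<open>g\<close> maps every block into a block of the same size, i.e. \<open>g \<in> \<C>\<^sub>i\<close>. Hence
all generators of rank at least \<open>|X| - 1\<close> are injective on the blocks of size \<open>l\<close>, and
this is inherited by all products of rank at least \<open>|X| - 1\<close>. But identifying two points
of a block of size \<open>l\<close> gives an element of \<open>\<Sigma>(X, \<P>)\<close> of rank \<open>|X| - 1\<close> violating it.\<close>

lemma partition_on_block_unique:
  "partition_on X P \<Longrightarrow> B \<in> P \<Longrightarrow> C \<in> P \<Longrightarrow> x \<in> B \<Longrightarrow> x \<in> C \<Longrightarrow> B = C"
  by (meson disjointD disjoint_iff partition_onD2)

lemma partition_on_block_subset: "partition_on X P \<Longrightarrow> B \<in> P \<Longrightarrow> B \<subseteq> X"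
  by (auto simp: partition_on_def)

lemma partition_on_ex_block: "partition_on X P \<Longrightarrow> x \<in> X \<Longrightarrow> \<exists>B\<in>P. x \<in> B"
  by (auto simp: partition_on_def)

lemma partition_on_block_nonempty: "partition_on X P \<Longrightarrow> B \<in> P \<Longrightarrow> B \<noteq> {}"
  by (auto simp: partition_on_def)

lemma partition_on_finite_block: "finite X \<Longrightarrow> partition_on X P \<Longrightarrow> B \<in> P \<Longrightarrow> finite B"
  by (meson finite_subset partition_on_block_subset)

lemma partition_on_card_eq_sum:
  assumes "finite X" and "partition_on X P"
  shows "card X = (\<Sum>B\<in>P. card B)"
proof -
  have "card (\<Union>P) = (\<Sum>B\<in>P. card B)"
    using assms partition_on_finite_block by (intro card_Union_disjoint partition_onD2) auto
  then show ?thesis using partition_onD1[OF assms(2)] by simp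
qed

lemma bij_betw_le_imp_eq:
  fixes h :: "'a \<Rightarrow> nat"
  assumes "finite A" and "bij_betw \<pi> A A" and le: "\<forall>x\<in>A. h x \<le> h (\<pi> x)" and "x \<in> A"
  shows "h (\<pi> x) = h x"
proof -
  have "(\<Sum>x\<in>A. h x) = (\<Sum>x\<in>A. h (\<pi> x))"
    using sum.reindex_bij_betw[OF assms(2), of h, symmetric] .
  then have "h x = h (\<pi> x)" by (rule sum_mono_inv) (use le assms in auto)
  then show ?thesis by simp
qed

lemma Sigma_part_block_map:
  assumes "g \<in> Sigma_part X P"
  obtains \<pi> where "\<forall>B\<in>P. \<pi> B \<in> P \<and> g ` B \<subseteq> \<pi> B"
proof -
  have "\<forall>B\<in>P. \<exists>C\<in>P. g ` B \<subseteq> C" using assms by (auto simp: Sigma_part_def T_part_def)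
  then show ?thesis using that bchoice[of P "\<lambda>B C. C \<in> P \<and> g ` B \<subseteq> C"] by blast
qed

lemma Sigma_part_image_subset: "g \<in> Sigma_part X P \<Longrightarrow> g ` X \<subseteq> X"
  by (auto simp: Sigma_part_def T_part_def)

lemma Sigma_part_block_map_bij:
  assumes fin: "finite X" and part: "partition_on X P" and g: "g \<in> Sigma_part X P"
    and \<pi>: "\<forall>B\<in>P. \<pi> B \<in> P \<and> g ` B \<subseteq> \<pi> B"
  shows "bij_betw \<pi> P P"
proof -
  have "P \<subseteq> \<pi> ` P"
  proof
    fix E assume E: "E \<in> P"
    then obtain x where x: "x \<in> X" "g x \<in> E"
      using g by (auto simp: Sigma_part_def)
    then obtain B where B: "B \<in> P" "x \<in> B"
      using partition_on_ex_block[OF part] by blast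
    then have "\<pi> B = E"
      using partition_on_block_unique[OF part] \<pi> E x by blast
    with B show "E \<in> \<pi> ` P" by blast
  qed
  with \<pi> have "\<pi> ` P = P" by blast
  moreover have "finite P" using finite_elements[OF fin part] .
  ultimately show ?thesis
    by (simp add: bij_betw_def eq_card_imp_inj_on)
qed

text \<open>Since the block map is a permutation of \<open>\<P>\<close>, a block is the only one mapped
into its image block.\<close>

lemma Sigma_part_preimage_in_block:
  assumes fin: "finite X" and part: "partition_on X P" and g: "g \<in> Sigma_part X P"
    and D: "D \<in> P" and E: "E \<in> P" and DE: "g ` D \<subseteq> E" and x: "x \<in> X" "g x \<in> E"
  shows "x \<in> D"
proof -
  obtain \<pi> where \<pi>: "\<forall>B\<in>P. \<pi> B \<in> P \<and> g ` B \<subseteq> \<pi> B"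
    using Sigma_part_block_map[OF g] .
  have inj: "inj_on \<pi> P"
    using Sigma_part_block_map_bij[OF fin part g \<pi>] by (simp add: bij_betw_def)
  obtain B where B: "B \<in> P" "x \<in> B"
    using partition_on_ex_block[OF part x(1)] by blast
  have "\<pi> B = E"
    using partition_on_block_unique[OF part] \<pi> B E x by blast
  moreover have "\<pi> D = E"
    using partition_on_block_unique[OF part] partition_on_block_nonempty[OF part D] \<pi> D E DE
    by blast
  ultimately have "B = D" using inj_onD[OF inj] B D by metis
  with B show ?thesis by simp
qed

lemma Sigma_part_image_blocks_disjoint:
  assumes fin: "finite X" and part: "partition_on X P" and g: "g \<in> Sigma_part X P"
    and B: "B \<in> P" and C: "C \<in> P" and "B \<noteq> C"
  shows "g ` B \<inter> g ` C = {}"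
proof (rule ccontr)
  assume "g ` B \<inter> g ` C \<noteq> {}"
  then obtain z where z: "z \<in> g ` B" "z \<in> g ` C" by blast
  then obtain y where "y \<in> C" "z = g y" by blast
  with z(1) have y: "y \<in> C" "g y \<in> g ` B" by simp_all
  obtain E where E: "E \<in> P" "g ` B \<subseteq> E"
    using g B by (auto simp: Sigma_part_def T_part_def)
  have "y \<in> B"
    using Sigma_part_preimage_in_block[OF fin part g B E(1) E(2)]
      partition_on_block_subset[OF part C] y E(2) by blast
  with y show False using partition_on_block_unique[OF part B C] \<open>B \<noteq> C\<close> by blast
qed

lemma Sigma_part_card_image_eq_sum:
  assumes fin: "finite X" and part: "partition_on X P" and g: "g \<in> Sigma_part X P"
  shows "card (g ` X) = (\<Sum>B\<in>P. card (g ` B))"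
proof -
  have "g ` X = (\<Union>B\<in>P. g ` B)" using partition_onD1[OF part] by auto
  also have "card \<dots> = (\<Sum>B\<in>P. card (g ` B))"
    using finite_elements[OF fin part] partition_on_finite_block[OF fin part]
      Sigma_part_image_blocks_disjoint[OF fin part g]
    by (intro card_UN_disjoint) auto
  finally show ?thesis .
qed

lemma Sigma_part_surj_image_block:
  assumes fin: "finite X" and part: "partition_on X P" and g: "g \<in> Sigma_part X P"
    and surj: "g ` X = X" and D: "D \<in> P"
  shows "g ` D \<in> P"
proof -
  obtain E where E: "E \<in> P" "g ` D \<subseteq> E"
    using g D by (auto simp: Sigma_part_def T_part_def)
  have "E \<subseteq> g ` D"
  proof
    fix e assume "e \<in> E"
    then obtain x where x: "x \<in> X" "e = g x"
      using surj partition_on_block_subset[OF part E(1)] by blast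
    then have "x \<in> D"
      using Sigma_part_preimage_in_block[OF fin part g D E] \<open>e \<in> E\<close> by blast
    with x show "e \<in> g ` D" by blast
  qed
  with E show ?thesis by auto
qed

text \<open>Block images are disjoint, so the rank is the sum of the block image sizes:
losing one point in total leaves room for exactly one non-injective block.\<close>

lemma Sigma_part_rank_defect_one:
  assumes fin: "finite X" and part: "partition_on X P" and g: "g \<in> Sigma_part X P"
    and rank: "card X - 1 \<le> card (g ` X)" and D: "D \<in> P" and ninj: "\<not> inj_on g D"
  shows "card (g ` D) = card D - 1" and "\<forall>B\<in>P. B \<noteq> D \<longrightarrow> inj_on g B"
proof -
  have finP: "finite P" using finite_elements[OF fin part] .
  have finB: "\<And>B. B \<in> P \<Longrightarrow> finite B" using partition_on_finite_block[OF fin part] .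
  have le: "\<forall>B\<in>P. card (g ` B) \<le> card B" using card_image_le finB by blast
  have lt: "card (g ` D) < card D"
    using le D ninj eq_card_imp_inj_on[OF finB[OF D]] le_neq_implies_less by blast
  define s where "s = (\<Sum>B\<in>P-{D}. card (g ` B))"
  define t where "t = (\<Sum>B\<in>P-{D}. card B)"
  have "card (g ` X) = card (g ` D) + s"
    unfolding Sigma_part_card_image_eq_sum[OF fin part g] s_def using sum.remove[OF finP D] .
  moreover have "card X = card D + t"
    unfolding partition_on_card_eq_sum[OF fin part] t_def using sum.remove[OF finP D] .
  moreover have "s \<le> t" unfolding s_def t_def using le by (intro sum_mono) auto
  ultimately have "card (g ` D) = card D - 1" and st: "s = t" using rank lt by linarith+
  then show "card (g ` D) = card D - 1" by simp
  show "\<forall>B\<in>P. B \<noteq> D \<longrightarrow> inj_on g B"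
  proof (intro ballI impI)
    fix B assume "B \<in> P" "B \<noteq> D"
    then have "card (g ` B) = card B"
      using sum_mono_inv[OF st[unfolded s_def t_def]] le finP by auto
    then show "inj_on g B" using eq_card_imp_inj_on finB \<open>B \<in> P\<close> by blast
  qed
qed

text \<open>The gap \<open>l - 1\<close> forces the block receiving the non-injective block to be at least as
large as it; every block map then preserves sizes, as it permutes \<open>\<P>\<close>.\<close>

lemma Sigma_part_rank_defect_one_in_C_part:
  assumes fin: "finite X" and part: "partition_on X P" and g: "g \<in> Sigma_part X P"
    and rank: "card X - 1 \<le> card (g ` X)" and D: "D \<in> P" and ninj: "\<not> inj_on g D"
    and l: "card D = block_size P i" and gap: "block_size P i - 1 \<notin> card ` P"
  shows "g \<in> C_part X P i"
proof -
  note defect = Sigma_part_rank_defect_one[OF fin part g rank D ninj]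
  have finB: "\<And>B. B \<in> P \<Longrightarrow> finite B" using partition_on_finite_block[OF fin part] .
  obtain \<pi> where \<pi>: "\<forall>B\<in>P. \<pi> B \<in> P \<and> g ` B \<subseteq> \<pi> B"
    using Sigma_part_block_map[OF g] .
  have image_le: "card (g ` B) \<le> card (\<pi> B)" if "B \<in> P" for B
    using \<pi> that finB by (meson card_mono)
  have "card B \<le> card (\<pi> B)" if B: "B \<in> P" for B
  proof (cases "B = D")
    case True
    have "card (\<pi> D) \<noteq> card D - 1" using gap l \<pi> D by force
    then have "card D \<le> card (\<pi> D)" using image_le[OF D] defect(1) by linarith
    with True show ?thesis by simp
  next
    case False
    then show ?thesis using image_le[OF B] defect(2) B by (simp add: card_image)
  qed
  then have "\<forall>B\<in>P. card (\<pi> B) = card B"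
    using bij_betw_le_imp_eq[OF finite_elements[OF fin part]
        Sigma_part_block_map_bij[OF fin part g \<pi>], of card] by blast
  then have "\<forall>B\<in>P. \<exists>C\<in>P. g ` B \<subseteq> C \<and> card C = card B" using \<pi> by blast
  then show ?thesis using g D l defect unfolding C_part_def by auto
qed

lemma generator_inj_on_blocks:
  assumes fin: "finite X" and part: "partition_on X P" and U: "U \<subseteq> Sigma_part X P"
    and none: "C_part X P i \<inter> U = {}" and gap: "block_size P i - 1 \<notin> card ` P"
    and g: "g \<in> S_part X P \<union> U" and rank: "card X - 1 \<le> card (g ` X)"
    and B: "B \<in> P" "card B = block_size P i"
  shows "inj_on g B"
proof (cases "g \<in> U")
  case True
  show ?thesis
  proof (rule ccontr)
    assume "\<not> inj_on g B"
    with True U have "g \<in> C_part X P i"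
      by (intro Sigma_part_rank_defect_one_in_C_part[OF fin part _ rank B(1) _ B(2) gap]) auto
    with True none show False by blast
  qed
next
  case False
  with g have "inj_on g X" by (auto simp: S_part_def bij_betw_def)
  then show ?thesis using inj_on_subset partition_on_block_subset[OF part B(1)] by blast
qed

text \<open>If \<open>f \<circ> g\<close> has rank \<open>|X| - 1\<close>, either \<open>g\<close> is onto, and then carries a block of size
\<open>l\<close> onto a block of size \<open>l\<close>, or \<open>g\<close> already has rank \<open>|X| - 1\<close> and \<open>f\<close> is injective on
its image.\<close>

lemma gen_sgp_rank_inj_on_blocks:
  assumes fin: "finite X" and part: "partition_on X P"
    and closed: "gen_sgp X G \<subseteq> Sigma_part X P"
    and gens: "\<And>g D. g \<in> G \<Longrightarrow> card X - 1 \<le> card (g ` X) \<Longrightarrow> D \<in> P \<Longrightarrow> card D = l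
                 \<Longrightarrow> inj_on g D"
    and "f \<in> gen_sgp X G" and "card X - 1 \<le> card (f ` X)" and "D \<in> P" and "card D = l"
  shows "inj_on f D"
  using assms(5-)
proof (induction arbitrary: D rule: gen_sgp.induct)
  case (base g)
  then show ?case using gens by blast
next
  case (comp f g)
  have gS: "g \<in> Sigma_part X P" using comp.hyps closed by blast
  have gX: "g ` X \<subseteq> X" using Sigma_part_image_subset[OF gS] .
  have DX: "D \<subseteq> X" using partition_on_block_subset[OF part comp.prems(2)] .
  have im: "compose X f g ` X = f ` g ` X" by (auto simp: compose_eq)
  have c1: "card (f ` g ` X) \<le> card (g ` X)" using card_image_le fin by blast
  have c2: "card (f ` g ` X) \<le> card (f ` X)"
    using card_mono[OF finite_imageI[OF fin] image_mono[OF gX]] .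
  have rg: "card X - 1 \<le> card (g ` X)" and rf: "card X - 1 \<le> card (f ` X)"
    using comp.prems(1) im c1 c2 by auto
  have ig: "inj_on g D" using comp.IH(2)[OF rg comp.prems(2,3)] .
  have "inj_on f (g ` D)"
  proof (cases "g ` X = X")
    case True
    have "g ` D \<in> P" using Sigma_part_surj_image_block[OF fin part gS True comp.prems(2)] .
    moreover have "card (g ` D) = l" using card_image[OF ig] comp.prems(3) by simp
    ultimately show ?thesis using comp.IH(1)[OF rf] by blast
  next
    case False
    then have "card (g ` X) < card X" using fin gX by (meson psubsetI psubset_card_mono)
    then have "card (f ` g ` X) = card (g ` X)" using c1 comp.prems(1) unfolding im by linarith
    then have "inj_on f (g ` X)" using eq_card_imp_inj_on fin by blast
    then show ?thesis using inj_on_subset[OF _ image_mono[OF DX]] by blast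
  qed
  with ig have "inj_on (f \<circ> g) D" by (rule comp_inj_on)
  then show ?case using DX by (simp add: inj_on_def compose_eq subset_iff)
qed

lemma block_size_in_sizes:
  assumes "finite P" and "1 \<le> i" and "i \<le> num_sizes P"
  shows "block_size P i \<in> card ` P"
proof -
  have "sorted_list_of_set (card ` P) ! (i - 1) \<in> set (sorted_list_of_set (card ` P))"
    using assms by (intro nth_mem) (simp add: num_sizes_def)
  then show ?thesis using assms(1) by (simp add: block_size_def)
qed

lemma size_less_block_size:
  assumes "finite P" and "1 \<le> i" and "i \<le> num_sizes P"
    and "s \<in> card ` P" and "s < block_size P i"
  shows "2 \<le> i" and "s \<le> block_size P (i - 1)"
proof -
  define xs where "xs = sorted_list_of_set (card ` P)"
  have bs: "block_size P j = xs ! (j - 1)" for j unfolding block_size_def xs_def ..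
  have sorted: "sorted xs" and len: "length xs = num_sizes P" and set: "set xs = card ` P"
    using assms(1) by (simp_all add: xs_def num_sizes_def)
  obtain k where k: "k < length xs" "xs ! k = s"
    using assms(4) set by (metis in_set_conv_nth)
  have "\<not> i - 1 \<le> k"
  proof
    assume "i - 1 \<le> k"
    then have "xs ! (i - 1) \<le> xs ! k" by (rule sorted_nth_mono[OF sorted _ k(1)])
    with k(2) assms(5) show False by (simp add: bs)
  qed
  then show "2 \<le> i" by linarith
  have "xs ! k \<le> xs ! (i - 1 - 1)"
    by (rule sorted_nth_mono[OF sorted]) (use \<open>\<not> i - 1 \<le> k\<close> len assms(3) in linarith)+
  with k(2) show "s \<le> block_size P (i - 1)" by (simp add: bs)
qed

lemma block_size_gap:
  assumes "finite P" and "0 \<notin> card ` P" and "1 \<le> i" and "i \<le> num_sizes P"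
    and "(i = 1 \<and> block_size P 1 \<noteq> 1) \<or>
         (i \<ge> 2 \<and> block_size P i - block_size P (i - 1) \<ge> 2)"
  shows "2 \<le> block_size P i" and "block_size P i - 1 \<notin> card ` P"
proof -
  have "block_size P i \<noteq> 0" using block_size_in_sizes[OF assms(1,3,4)] assms(2) by force
  then show l2: "2 \<le> block_size P i" using assms(5) by (elim disjE) auto
  show "block_size P i - 1 \<notin> card ` P"
  proof
    assume "block_size P i - 1 \<in> card ` P"
    from size_less_block_size[OF assms(1,3,4) this] l2
    have "2 \<le> i" "block_size P i - 1 \<le> block_size P (i - 1)" by simp_all
    with assms(5) show False by arith
  qed
qed

definition collapse :: "'a set \<Rightarrow> 'a \<Rightarrow> 'a \<Rightarrow> 'a \<Rightarrow> 'a" where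
  "collapse X y x = (\<lambda>z\<in>X. if z = y then x else z)"

lemma collapse_in_Sigma_part:
  assumes part: "partition_on X P" and D: "D \<in> P" and "x \<in> D" and "y \<in> D"
  shows "collapse X y x \<in> Sigma_part X P"
proof -
  have into: "collapse X y x ` B \<subseteq> B" if B: "B \<in> P" for B
  proof
    fix w assume "w \<in> collapse X y x ` B"
    then obtain z where z: "z \<in> B" "w = collapse X y x z" by blast
    have "z \<in> X" using z(1) partition_on_block_subset[OF part B] by blast
    show "w \<in> B"
    proof (cases "z = y")
      case True
      then have "B = D" using partition_on_block_unique[OF part B D z(1)] assms(4) by simp
      with True z \<open>z \<in> X\<close> assms(3) show ?thesis by (simp add: collapse_def)
    next
      case False
      with z \<open>z \<in> X\<close> show ?thesis by (simp add: collapse_def)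
    qed
  qed
  have hits: "collapse X y x ` X \<inter> B \<noteq> {}" if B: "B \<in> P" for B
  proof -
    obtain e where e: "e \<in> B" using partition_on_block_nonempty[OF part B] by blast
    then have "collapse X y x e \<in> B" using into[OF B] by blast
    moreover have "e \<in> X" using e partition_on_block_subset[OF part B] by blast
    ultimately show ?thesis by blast
  qed
  have "collapse X y x \<in> X \<rightarrow>\<^sub>E X"
    using partition_on_block_subset[OF part D] assms(3)
    unfolding collapse_def restrict_PiE_iff by auto
  with into hits show ?thesis
    unfolding Sigma_part_def T_part_def by (intro CollectI conjI ballI) blast+
qed

lemma card_image_collapse:
  assumes "finite X" shows "card X - 1 \<le> card (collapse X y x ` X)"
proof -
  have "X - {y} \<subseteq> collapse X y x ` X"
    by (auto simp: collapse_def image_iff)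
  then have "card (X - {y}) \<le> card (collapse X y x ` X)"
    using assms by (simp add: card_mono)
  then show ?thesis by (metis card_Diff_singleton_if diff_le_self le_trans)
qed

lemma collapse_not_inj_on:
  assumes "x \<in> D" and "y \<in> D" and "x \<noteq> y" and "D \<subseteq> X"
  shows "\<not> inj_on (collapse X y x) D"
proof
  assume inj: "inj_on (collapse X y x) D"
  have "collapse X y x y = collapse X y x x" using assms by (auto simp: collapse_def)
  then have "y = x" using inj_onD[OF inj _ assms(2,1)] by blast
  with assms(3) show False by simp
qed

theorem lemma4p2:
  fixes X :: "'a set" and P :: "'a set set" and U :: "('a \<Rightarrow> 'a) set" and i :: nat
  assumes "finite X" and "X \<noteq> {}"
    and "partition_on X P"
    and "U \<subseteq> Sigma_part X P"
    and "gen_sgp X (S_part X P \<union> U) = Sigma_part X P"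
    and "1 \<le> i" and "i \<le> num_sizes P"
    and "(i = 1 \<and> block_size P 1 \<noteq> 1) \<or>
         (i \<ge> 2 \<and> block_size P i - block_size P (i - 1) \<ge> 2)"
  shows "C_part X P i \<inter> U \<noteq> {}"
proof
  assume none: "C_part X P i \<inter> U = {}"
  note fin = assms(1) and part = assms(3)
  have finP: "finite P" using finite_elements[OF fin part] .
  have "card B \<noteq> 0" if "B \<in> P" for B
    using partition_on_block_nonempty[OF part that] partition_on_finite_block[OF fin part that]
    by simp
  then have "0 \<notin> card ` P" by (metis imageE)
  note gap = block_size_gap[OF finP this assms(6-8)]
  obtain D where D: "D \<in> P" "card D = block_size P i"
    using block_size_in_sizes[OF finP assms(6,7)] by auto
  obtain x y where xy: "x \<in> D" "y \<in> D" "x \<noteq> y"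
    using card_le_Suc0_iff_eq[OF partition_on_finite_block[OF fin part D(1)]] gap(1) D(2)
    by (metis not_less_eq_eq numeral_2_eq_2)
  have generated: "collapse X y x \<in> gen_sgp X (S_part X P \<union> U)"
    using collapse_in_Sigma_part[OF part D(1) xy(1,2)] assms(5) by simp
  have "inj_on (collapse X y x) D"
    by (rule gen_sgp_rank_inj_on_blocks[OF fin part equalityD1[OF assms(5)]])
      (fact generator_inj_on_blocks[OF fin part assms(4) none gap(2)] generated
        card_image_collapse[OF fin] D)+
  with collapse_not_inj_on[OF xy partition_on_block_subset[OF part D(1)]] show False ..
qed

end
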